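(* Let $(\mathcal{L},\mathrm{Cn},\mathfrak{M})$ be an ideal logical system and let $\mathrm{FR}:2^{\mathfrak{M}}\to\mathcal{P}_{fin}(\mathcal{L})$ be a function with $\mathrm{Mod}(\mathrm{FR}(\mathbb{M}))=\mathbb{M}$ for every $\mathbb{M}\subseteq\mathfrak{M}$. Define $\mathcal{C}(\mathcal{B},M)\coloneqq\mathrm{FR}(\mathrm{Mod}(\mathcal{B})\setminus[M]^{\mathcal{L}})$ for $\mathcal{B}\in\mathcal{P}_{fin}(\mathcal{L})$ and $M\in\mathfrak{M}$. Then for every $\mathcal{B}\in\mathcal{P}_{fin}(\mathcal{L})$ and $M\in\mathfrak{M}$: (success) $M\notin\mathrm{Mod}(\mathcal{C}(\mathcal{B},M))$; (inclusion) $\mathrm{Mod}(\mathcal{C}(\mathcal{B},M))\subseteq\mathrm{Mod}(\mathcal{B})$; (retainment) if $M'\in\mathrm{Mod}(\mathcal{B})\setminus\mathrm{Mod}(\mathcal{C}(\mathcal{B},M))$ then $M'\equiv^{\mathcal{L}}M$; (extensionality) if $M\equiv^{\mathcal{L}}M'$ then $\mathcal{C}(\mathcal{B},M)=\mathcal{C}(\mathcal{B},M')$.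
   Context: $\mathcal{L}$ is a language (set of formulae), $\mathfrak{M}$ a fixed set of models with a satisfaction relation $\models$ between models and formulae, and $\mathrm{Cn}$ a Tarskian consequence operator on $\mathcal{L}$. $\mathcal{P}_{fin}(\mathcal{L})$ is the set of finite subsets (bases) of $\mathcal{L}$. For $\mathcal{B}\subseteq\mathcal{L}$, $\mathrm{Mod}(\mathcal{B})=\{M\in\mathfrak{M}\mid M\models\varphi$ for all $\varphi\in\mathcal{B}\}$; $\mathrm{Mod}(\varphi)=\mathrm{Mod}(\{\varphi\})$. $M\equiv^{\mathcal{L}}M'$ iff for all $\varphi\in\mathcal{L}$, $M\models\varphi$ iff $M'\models\varphi$; $[M]^{\mathcal{L}}=\{M'\in\mathfrak{M}\mid M'\equiv^{\mathcal{L}}M\}$. The triple $(\mathcal{L},\mathrm{Cn},\mathfrak{M})$ is an ideal logical system if (1) for every $\mathcal{B}\subseteq\mathcal{L}$ and $\varphi\in\mathcal{L}$, $\varphi\in\mathrm{Cn}(\mathcal{B})$ iff $\mathrm{Mod}(\mathcal{B})\subseteq\mathrm{Mod}(\varphi)$, and (2) for every $\mathbb{M}\subseteq\mathfrak{M}$ there is a finite $\mathcal{B}\subseteq\mathcal{L}$ with $\mathrm{Mod}(\mathcal{B})=\mathbb{M}$. *)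

theory Defs
  imports Main
begin

definition Mod :: "'m set \<Rightarrow> ('m \<Rightarrow> 'f \<Rightarrow> bool) \<Rightarrow> 'f set \<Rightarrow> 'm set" where
  "Mod Ms sat B = {M \<in> Ms. \<forall>\<phi>\<in>B. sat M \<phi>}"

definition Mod1 :: "'m set \<Rightarrow> ('m \<Rightarrow> 'f \<Rightarrow> bool) \<Rightarrow> 'f \<Rightarrow> 'm set" where
  "Mod1 Ms sat \<phi> = Mod Ms sat {\<phi>}"

definition equivL :: "'f set \<Rightarrow> ('m \<Rightarrow> 'f \<Rightarrow> bool) \<Rightarrow> 'm \<Rightarrow> 'm \<Rightarrow> bool" where
  "equivL L sat M M' \<longleftrightarrow> (\<forall>\<phi>\<in>L. sat M \<phi> \<longleftrightarrow> sat M' \<phi>)"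

definition eqclass :: "'f set \<Rightarrow> 'm set \<Rightarrow> ('m \<Rightarrow> 'f \<Rightarrow> bool) \<Rightarrow> 'm \<Rightarrow> 'm set" where
  "eqclass L Ms sat M = {M' \<in> Ms. equivL L sat M' M}"

definition tarskian :: "'f set \<Rightarrow> ('f set \<Rightarrow> 'f set) \<Rightarrow> bool" where
  "tarskian L Cn \<longleftrightarrow>
     (\<forall>B\<subseteq>L. B \<subseteq> Cn B \<and> Cn B \<subseteq> L) \<and>
     (\<forall>A B. A \<subseteq> B \<and> B \<subseteq> L \<longrightarrow> Cn A \<subseteq> Cn B) \<and>
     (\<forall>B\<subseteq>L. Cn (Cn B) = Cn B)"

definition ideal_logical_system ::
  "'f set \<Rightarrow> ('f set \<Rightarrow> 'f set) \<Rightarrow> 'm set \<Rightarrow> ('m \<Rightarrow> 'f \<Rightarrow> bool) \<Rightarrow> bool" where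
  "ideal_logical_system L Cn Ms sat \<longleftrightarrow>
     tarskian L Cn \<and>
     (\<forall>B\<subseteq>L. \<forall>\<phi>\<in>L. \<phi> \<in> Cn B \<longleftrightarrow> Mod Ms sat B \<subseteq> Mod1 Ms sat \<phi>) \<and>
     (\<forall>MM\<subseteq>Ms. \<exists>B. finite B \<and> B \<subseteq> L \<and> Mod Ms sat B = MM)"

end

theory Submission
  imports Defs
begin

(* Since FR realises every set of models, the models of C B M are exactly Mod B with the
   L-equivalence class of M removed; the four postulates are read off this description. *)

lemma Mod_subset_models: "Mod Ms sat B \<subseteq> Ms"
  by (auto simp: Mod_def)

lemma self_in_eqclass: "M \<in> Ms \<Longrightarrow> M \<in> eqclass L Ms sat M"
  by (simp add: eqclass_def equivL_def)

lemma eqclass_cong: "equivL L sat M M' \<Longrightarrow> eqclass L Ms sat M = eqclass L Ms sat M'"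
  by (auto simp: eqclass_def equivL_def)

lemma Mod_FR_remove_eqclass:
  assumes "\<And>MM. MM \<subseteq> Ms \<Longrightarrow> Mod Ms sat (FR MM) = MM"
  shows "Mod Ms sat (FR (Mod Ms sat B - eqclass L Ms sat M)) = Mod Ms sat B - eqclass L Ms sat M"
  by (rule assms, rule order_trans[OF Diff_subset Mod_subset_models])

theorem mainTheorem7:
  fixes L :: "'f set" and Cn :: "'f set \<Rightarrow> 'f set" and Ms :: "'m set"
    and sat :: "'m \<Rightarrow> 'f \<Rightarrow> bool" and FR :: "'m set \<Rightarrow> 'f set"
    and C :: "'f set \<Rightarrow> 'm \<Rightarrow> 'f set"
  assumes ideal: "ideal_logical_system L Cn Ms sat"
    and FR_fin: "\<And>MM. MM \<subseteq> Ms \<Longrightarrow> finite (FR MM) \<and> FR MM \<subseteq> L"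
    and FR_mod: "\<And>MM. MM \<subseteq> Ms \<Longrightarrow> Mod Ms sat (FR MM) = MM"
    and C_def: "\<And>B M. C B M = FR (Mod Ms sat B - eqclass L Ms sat M)"
    and B_fin: "finite B" and B_L: "B \<subseteq> L" and M_in: "M \<in> Ms"
  shows "M \<notin> Mod Ms sat (C B M)
     \<and> Mod Ms sat (C B M) \<subseteq> Mod Ms sat B
     \<and> (\<forall>M'. M' \<in> Mod Ms sat B - Mod Ms sat (C B M) \<longrightarrow> equivL L sat M' M)
     \<and> (\<forall>M'\<in>Ms. equivL L sat M M' \<longrightarrow> C B M = C B M')"
proof -
  have Mod_C: "Mod Ms sat (C B X) = Mod Ms sat B - eqclass L Ms sat X" for X
    unfolding C_def using Mod_FR_remove_eqclass[OF FR_mod] .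
  have success: "M \<notin> Mod Ms sat (C B M)"
    unfolding Mod_C using self_in_eqclass[OF M_in] by blast
  have inclusion: "Mod Ms sat (C B M) \<subseteq> Mod Ms sat B"
    unfolding Mod_C by blast
  have retainment: "\<forall>M'. M' \<in> Mod Ms sat B - Mod Ms sat (C B M) \<longrightarrow> equivL L sat M' M"
    unfolding Mod_C by (auto simp: eqclass_def)
  have extensionality: "\<forall>M'\<in>Ms. equivL L sat M M' \<longrightarrow> C B M = C B M'"
    unfolding C_def using eqclass_cong by metis
  show ?thesis
    using success inclusion retainment extensionality by blast
qed

end
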